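(* Let $d,K,n$ be positive integers with $K\ge 2$. With $\mathcal L_0$ and $\mathcal{WH}^-$ as defined below, there exists $\tau_0>0$ such that for every $\tau\in(0,\tau_0)$, $$\operatorname{argmin}_{(\mathbf W,\mathbf H)\in\mathrm{OB}(d,K)\times\mathrm{OB}(d,nK)}\mathcal L_0(\mathbf W,\mathbf H,\tau)\subseteq\mathcal{WH}^-.$$
   Context: $\mathrm{OB}(d,m)$ is the set of real $d\times m$ matrices with unit-norm columns; $\mathbf W$ has columns $\mathbf w_k$ ($k\in[K]$), $\mathbf H$ has columns $\mathbf h_{k,i}$ ($k\in[K],i\in[n]$). $\mathbf y_k$ is the $k$-th standard basis vector of $\mathbb R^K$; $\mathcal L_{\mathrm{CE}}(\mathbf z,\mathbf y_k,\tau)=-\log\big(\exp(z_k/\tau)/\sum_{j}\exp(z_j/\tau)\big)$. $\mathcal L_0(\mathbf W,\mathbf H,\tau)=\tau\log\sum_{i=1}^n\sum_{k=1}^K\mathcal L_{\mathrm{CE}}(\mathbf W^\top\mathbf h_{k,i},\mathbf y_k,\tau)$. $\mathcal{WH}^-=\{(\mathbf W,\mathbf H)\in\mathrm{OB}(d,K)\times\mathrm{OB}(d,nK):(\mathbf w_{k'}-\mathbf w_k)^\top\mathbf h_{k,i}\le0\ \forall i,k,\ k'\ne k\}$. *)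

theory Defs
  imports Complex_Main
begin

text \<open>A real d x m matrix is represented as a function M :: nat => nat => real,
  where M c r is the r-th entry (r < d) of the c-th column (c < m); entries
  outside the range are required to be zero.\<close>

definition OB :: "nat \<Rightarrow> nat \<Rightarrow> (nat \<Rightarrow> nat \<Rightarrow> real) set" where
  "OB d m = {M. (\<forall>c<m. (\<Sum>r<d. (M c r)^2) = 1) \<and>
                (\<forall>c r. (m \<le> c \<or> d \<le> r) \<longrightarrow> M c r = 0)}"

text \<open>Column h_{k,i} of H (k < K, i < n) is the column with index k*n+i.\<close>
definition hcol :: "nat \<Rightarrow> (nat \<Rightarrow> nat \<Rightarrow> real) \<Rightarrow> nat \<Rightarrow> nat \<Rightarrow> (nat \<Rightarrow> real)" where
  "hcol n H k i = H (k * n + i)"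

definition L_CE :: "nat \<Rightarrow> (nat \<Rightarrow> real) \<Rightarrow> nat \<Rightarrow> real \<Rightarrow> real" where
  "L_CE K z k tau = - ln (exp (z k / tau) / (\<Sum>j<K. exp (z j / tau)))"

definition logits :: "nat \<Rightarrow> (nat \<Rightarrow> nat \<Rightarrow> real) \<Rightarrow> (nat \<Rightarrow> real) \<Rightarrow> nat \<Rightarrow> real" where
  "logits d W h j = (\<Sum>r<d. W j r * h r)"

definition L0 :: "nat \<Rightarrow> nat \<Rightarrow> nat \<Rightarrow> (nat \<Rightarrow> nat \<Rightarrow> real) \<Rightarrow> (nat \<Rightarrow> nat \<Rightarrow> real) \<Rightarrow> real \<Rightarrow> real" where
  "L0 d K n W H tau =
     tau * ln (\<Sum>i<n. \<Sum>k<K. L_CE K (logits d W (hcol n H k i)) k tau)"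

definition argmin_L0 :: "nat \<Rightarrow> nat \<Rightarrow> nat \<Rightarrow> real \<Rightarrow> ((nat \<Rightarrow> nat \<Rightarrow> real) \<times> (nat \<Rightarrow> nat \<Rightarrow> real)) set" where
  "argmin_L0 d K n tau =
     {(W, H). W \<in> OB d K \<and> H \<in> OB d (n * K) \<and>
        (\<forall>W' H'. W' \<in> OB d K \<longrightarrow> H' \<in> OB d (n * K) \<longrightarrow>
           L0 d K n W H tau \<le> L0 d K n W' H' tau)}"

definition WH_minus :: "nat \<Rightarrow> nat \<Rightarrow> nat \<Rightarrow> ((nat \<Rightarrow> nat \<Rightarrow> real) \<times> (nat \<Rightarrow> nat \<Rightarrow> real)) set" where
  "WH_minus d K n =
     {(W, H). W \<in> OB d K \<and> H \<in> OB d (n * K) \<and>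
        (\<forall>i<n. \<forall>k<K. \<forall>k'<K. k' \<noteq> k \<longrightarrow>
           (\<Sum>r<d. (W k' r - W k r) * hcol n H k i r) \<le> 0)}"

end

theory Submission
  imports Defs
begin

text \<open>If a minimiser had a positive margin (w_k' - w_k)^T h_{k,i}, the cross-entropy of that
  single sample would already be at least ln (1 + exp (margin / tau)), while minimality bounds the
  total cross-entropy (the monotone quantity inside L0) by that of any competitor. For d >= 2 this
  lower bound exceeds ln 2, whereas the competitor placing the w_k at the vertices of a regular
  K-gon and every h_{k,i} at w_k has total cross-entropy O(tau). For d = 1 all entries are +-1, so
  a positive margin equals 2 and the lower bound exceeds 2 / tau, whereas the competitor with all
  columns equal has the constant total n K ln K.\<close>

lemma less_ln_one_plus_exp: "(x::real) < ln (1 + exp x)"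
proof -
  have "x = ln (exp x)" by simp
  also have "\<dots> < ln (1 + exp x)"
    by (rule ln_less_cancel_iff[THEN iffD2]) (auto intro: add_pos_pos)
  finally show ?thesis .
qed

lemma exp_neg_le_inverse:
  fixes x :: real
  assumes "0 < x"
  shows "exp (- x) \<le> 1 / x"
proof -
  have "x \<le> exp x" using exp_ge_add_one_self[of x] by linarith
  then show ?thesis using assms by (simp add: exp_minus field_simps)
qed

lemma L_CE_eq_ln_sum_exp:
  assumes "k < K"
  shows "L_CE K z k tau = ln (\<Sum>j<K. exp ((z j - z k) / tau))"
proof -
  have "0 < (\<Sum>j<K. exp (z j / tau))" using assms by (intro sum_pos) auto
  moreover have "(\<Sum>j<K. exp ((z j - z k) / tau)) = (\<Sum>j<K. exp (z j / tau)) / exp (z k / tau)"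
    by (simp add: diff_divide_distrib exp_diff sum_divide_distrib)
  ultimately show ?thesis by (simp add: L_CE_def ln_div)
qed

lemma ln_one_plus_exp_le_L_CE:
  assumes "k < K" "j < K" "j \<noteq> k"
  shows "ln (1 + exp ((z j - z k) / tau)) \<le> L_CE K z k tau"
proof -
  have "1 + exp ((z j - z k) / tau) = (\<Sum>x\<in>{j, k}. exp ((z x - z k) / tau))"
    using assms by simp
  also have "\<dots> \<le> (\<Sum>x<K. exp ((z x - z k) / tau))"
    by (rule sum_mono2) (use assms in auto)
  finally show ?thesis
    unfolding L_CE_eq_ln_sum_exp[OF assms(1)] by (intro ln_mono) (auto intro: add_pos_pos)
qed

lemma L_CE_pos:
  assumes "k < K" "2 \<le> K"
  shows "0 < L_CE K z k tau"
proof -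
  define j where "j = (if k = 0 then 1 else 0 :: nat)"
  have "j < K" "j \<noteq> k" using assms by (auto simp: j_def)
  have "0 < ln (1 + exp ((z j - z k) / tau))" by (intro ln_gt_zero) (simp add: add_pos_pos)
  also have "\<dots> \<le> L_CE K z k tau" using ln_one_plus_exp_le_L_CE assms \<open>j < K\<close> \<open>j \<noteq> k\<close> by blast
  finally show ?thesis .
qed

lemma L_CE_le_of_logit_gap:
  assumes "k < K" "0 < tau" "0 < delta"
    and gap: "\<And>j. j < K \<Longrightarrow> j \<noteq> k \<Longrightarrow> z j - z k \<le> - delta"
  shows "L_CE K z k tau \<le> real K * tau / delta"
proof -
  have term_le: "exp ((z j - z k) / tau) \<le> tau / delta" if "j < K" "j \<noteq> k" for j
  proof -
    have "(z j - z k) / tau \<le> - delta / tau"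
      using gap[OF that] assms(2) by (intro divide_right_mono) auto
    then have "exp ((z j - z k) / tau) \<le> exp (- (delta / tau))" by simp
    also have "\<dots> \<le> tau / delta" using exp_neg_le_inverse[of "delta / tau"] assms by simp
    finally show ?thesis .
  qed
  have "(\<Sum>j<K. exp ((z j - z k) / tau)) = 1 + (\<Sum>j\<in>{..<K} - {k}. exp ((z j - z k) / tau))"
    using assms(1) by (simp add: sum.remove[of _ k])
  also have "\<dots> \<le> 1 + real (card ({..<K} - {k})) * (tau / delta)"
    using term_le sum_bounded_above[of "{..<K} - {k}" _ "tau / delta"] by simp
  also have "\<dots> \<le> 1 + real K * (tau / delta)"
    using assms by (intro add_left_mono mult_right_mono) auto
  finally have "L_CE K z k tau \<le> ln (1 + real K * (tau / delta))"
    unfolding L_CE_eq_ln_sum_exp[OF assms(1)] using assms(1) by (intro ln_mono sum_pos) auto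
  also have "\<dots> \<le> real K * (tau / delta)" using assms by (intro ln_add_one_self_le_self) auto
  finally show ?thesis by simp
qed

definition total_CE ::
    "nat \<Rightarrow> nat \<Rightarrow> nat \<Rightarrow> (nat \<Rightarrow> nat \<Rightarrow> real) \<Rightarrow> (nat \<Rightarrow> nat \<Rightarrow> real) \<Rightarrow> real \<Rightarrow> real" where
  "total_CE d K n W H tau = (\<Sum>i<n. \<Sum>k<K. L_CE K (logits d W (hcol n H k i)) k tau)"

lemma L_CE_le_total_CE:
  assumes "2 \<le> K" "i < n" "k < K"
  shows "L_CE K (logits d W (hcol n H k i)) k tau \<le> total_CE d K n W H tau"
proof -
  have nonneg: "0 \<le> L_CE K (logits d W (hcol n H k' i')) k' tau" if "k' < K" for k' i'
    by (rule less_imp_le, rule L_CE_pos[OF that assms(1)])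
  have "L_CE K (logits d W (hcol n H k i)) k tau \<le> (\<Sum>k<K. L_CE K (logits d W (hcol n H k i)) k tau)"
    by (rule member_le_sum) (use assms nonneg in auto)
  also have "\<dots> \<le> total_CE d K n W H tau"
    unfolding total_CE_def by (rule member_le_sum) (use assms nonneg in \<open>auto intro: sum_nonneg\<close>)
  finally show ?thesis .
qed

lemma total_CE_pos:
  assumes "2 \<le> K" "0 < n"
  shows "0 < total_CE d K n W H tau"
  unfolding total_CE_def using assms
  by (intro sum_pos) (auto intro!: sum_pos L_CE_pos simp: lessThan_empty_iff)

lemma argmin_L0_total_CE_le:
  assumes "(W, H) \<in> argmin_L0 d K n tau" "W' \<in> OB d K" "H' \<in> OB d (n * K)"
    and "2 \<le> K" "0 < n" "0 < tau"
  shows "total_CE d K n W H tau \<le> total_CE d K n W' H' tau"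
proof -
  have "tau * ln (total_CE d K n W H tau) \<le> tau * ln (total_CE d K n W' H' tau)"
    using assms(1-3) unfolding argmin_L0_def L0_def total_CE_def by auto
  then show ?thesis using assms(6) total_CE_pos[OF assms(4,5)] by simp
qed

definition margin ::
    "nat \<Rightarrow> nat \<Rightarrow> (nat \<Rightarrow> nat \<Rightarrow> real) \<Rightarrow> (nat \<Rightarrow> nat \<Rightarrow> real) \<Rightarrow> nat \<Rightarrow> nat \<Rightarrow> nat \<Rightarrow> real" where
  "margin d n W H k i k' = (\<Sum>r<d. (W k' r - W k r) * hcol n H k i r)"

lemma margin_eq_logits_diff:
  "margin d n W H k i k' = logits d W (hcol n H k i) k' - logits d W (hcol n H k i) k"
  by (simp add: margin_def logits_def sum_subtractf[symmetric] left_diff_distrib)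

lemma argmin_L0_margin_bound:
  assumes "(W, H) \<in> argmin_L0 d K n tau" "W' \<in> OB d K" "H' \<in> OB d (n * K)"
    and "2 \<le> K" "0 < n" "0 < tau" "i < n" "k < K" "k' < K" "k' \<noteq> k"
  shows "ln (1 + exp (margin d n W H k i k' / tau)) \<le> total_CE d K n W' H' tau"
proof -
  have "ln (1 + exp (margin d n W H k i k' / tau)) \<le> L_CE K (logits d W (hcol n H k i)) k tau"
    unfolding margin_eq_logits_diff using ln_one_plus_exp_le_L_CE assms(8-10) by blast
  also have "\<dots> \<le> total_CE d K n W H tau" using L_CE_le_total_CE assms(4,7,8) by blast
  also have "\<dots> \<le> total_CE d K n W' H' tau" using argmin_L0_total_CE_le assms(1-6) by blast
  finally show ?thesis .
qed

lemma argmin_L0_subset_WH_minus: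
  assumes "W' \<in> OB d K" "H' \<in> OB d (n * K)" "2 \<le> K" "0 < n" "0 < tau"
    and small: "\<And>W H k i k'. W \<in> OB d K \<Longrightarrow> H \<in> OB d (n * K) \<Longrightarrow> i < n \<Longrightarrow> k < K \<Longrightarrow>
      k' < K \<Longrightarrow> 0 < margin d n W H k i k' \<Longrightarrow>
      total_CE d K n W' H' tau < ln (1 + exp (margin d n W H k i k' / tau))"
  shows "argmin_L0 d K n tau \<subseteq> WH_minus d K n"
proof (rule subsetI, rule ccontr)
  fix p assume p: "p \<in> argmin_L0 d K n tau" "p \<notin> WH_minus d K n"
  then obtain W H where WH: "p = (W, H)" "W \<in> OB d K" "H \<in> OB d (n * K)"
    by (auto simp: argmin_L0_def)
  then obtain i k k' where "i < n" "k < K" "k' < K" "k' \<noteq> k" "0 < margin d n W H k i k'"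
    using p(2) by (auto simp: WH_minus_def margin_def not_le)
  then show False
    using argmin_L0_margin_bound[OF p(1)[unfolded WH(1)] assms(1-5)] small[OF WH(2,3)] by fastforce
qed

lemma sample_index_less:
  fixes k K i n :: nat
  assumes "k < K" "i < n"
  shows "k * n + i < n * K"
proof -
  have "k * n + i < Suc k * n" using assms by simp
  also have "\<dots> \<le> K * n" using assms by (intro mult_right_mono) auto
  finally show ?thesis by (simp add: mult.commute)
qed

definition collapsed :: "nat \<Rightarrow> nat \<Rightarrow> nat \<Rightarrow> real" where
  "collapsed m c r = (if c < m \<and> r = 0 then 1 else 0)"

lemma collapsed_OB: "0 < d \<Longrightarrow> collapsed m \<in> OB d m"
  unfolding OB_def collapsed_def by (auto simp: if_distrib[of "\<lambda>x. x ^ 2"] cong: if_cong)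

lemma total_CE_collapsed:
  assumes "0 < d"
  shows "total_CE d K n (collapsed K) (collapsed (n * K)) tau = real n * (real K * ln (real K))"
proof -
  have "L_CE K (logits d (collapsed K) (hcol n (collapsed (n * K)) k i)) k tau = ln (real K)"
    if "k < K" "i < n" for k i
    using that sample_index_less[OF that] assms
    by (simp add: L_CE_eq_ln_sum_exp logits_def hcol_def collapsed_def)
  then show ?thesis unfolding total_CE_def by simp
qed

lemma OB_dim1_entry: "M \<in> OB 1 m \<Longrightarrow> c < m \<Longrightarrow> M c 0 = 1 \<or> M c 0 = -1"
  by (auto simp: OB_def power2_eq_1_iff)

lemma margin_dim1_pos_eq_2:
  assumes "W \<in> OB 1 K" "H \<in> OB 1 (n * K)" "i < n" "k < K" "k' < K"
    and "0 < margin 1 n W H k i k'"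
  shows "margin 1 n W H k i k' = 2"
  using assms OB_dim1_entry[OF assms(1) assms(4)] OB_dim1_entry[OF assms(1) assms(5)]
    OB_dim1_entry[OF assms(2) sample_index_less[OF assms(4,3)]]
  by (auto simp: margin_def hcol_def)

definition repeat_columns :: "nat \<Rightarrow> nat \<Rightarrow> (nat \<Rightarrow> nat \<Rightarrow> real) \<Rightarrow> nat \<Rightarrow> nat \<Rightarrow> real" where
  "repeat_columns n K W c r = (if c < n * K then W (c div n) r else 0)"

lemma repeat_columns_OB: "W \<in> OB d K \<Longrightarrow> repeat_columns n K W \<in> OB d (n * K)"
  by (auto simp: OB_def repeat_columns_def less_mult_imp_div_less mult.commute)

lemma hcol_repeat_columns: "k < K \<Longrightarrow> i < n \<Longrightarrow> hcol n (repeat_columns n K W) k i = W k"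
  using sample_index_less[of k K i n] by (simp add: hcol_def repeat_columns_def)

definition polygon_angle :: "nat \<Rightarrow> nat \<Rightarrow> real" where
  "polygon_angle K c = 2 * pi * real c / real K"

definition polygon :: "nat \<Rightarrow> nat \<Rightarrow> nat \<Rightarrow> real" where
  "polygon K c r =
     (if c < K \<and> r = 0 then cos (polygon_angle K c)
      else if c < K \<and> r = 1 then sin (polygon_angle K c) else 0)"

lemma sum_first_two:
  fixes f :: "nat \<Rightarrow> real"
  assumes "2 \<le> d" "\<And>r. 2 \<le> r \<Longrightarrow> f r = 0"
  shows "(\<Sum>r<d. f r) = f 0 + f 1"
proof -
  have "(\<Sum>r<d. f r) = (\<Sum>r\<in>{0, 1}. f r)"
    by (rule sum.mono_neutral_right) (use assms in auto)
  then show ?thesis by simp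
qed

lemma polygon_OB: "2 \<le> d \<Longrightarrow> polygon K \<in> OB d K"
  by (auto simp: OB_def polygon_def sum_first_two)

lemma logits_polygon:
  assumes "2 \<le> d" "j < K" "k < K"
  shows "logits d (polygon K) (polygon K k) j = cos (polygon_angle K j - polygon_angle K k)"
  unfolding logits_def using assms by (subst sum_first_two) (auto simp: polygon_def cos_diff)

lemma cos_polygon_angle_diff_lt_1:
  assumes "j < K" "k < K" "j \<noteq> k"
  shows "cos (polygon_angle K j - polygon_angle K k) < 1"
proof -
  have "cos (polygon_angle K j - polygon_angle K k) \<noteq> 1"
  proof
    assume "cos (polygon_angle K j - polygon_angle K k) = 1"
    then obtain m :: int where "polygon_angle K j - polygon_angle K k = real_of_int m * 2 * pi"
      by (auto simp: cos_one_2pi_int)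
    then have "2 * pi * (real j - real k) = 2 * pi * (real_of_int m * real K)"
      using assms by (simp add: polygon_angle_def field_simps)
    then have "real j - real k = real_of_int m * real K" by simp
    then have "int j - int k = m * int K"
      by (metis of_int_eq_iff of_int_mult of_int_of_nat_eq of_int_diff)
    then have "\<bar>m\<bar> * int K = \<bar>int j - int k\<bar>" by (simp add: abs_mult)
    also have "\<dots> < 1 * int K" using assms(1,2) by (simp add: abs_less_iff)
    finally have "\<bar>m\<bar> < 1" by (rule mult_right_less_imp_less) simp
    then show False using \<open>int j - int k = m * int K\<close> assms(3) by simp
  qed
  then show ?thesis using cos_le_one le_less by blast
qed

lemma polygon_gap:
  obtains delta where "0 < delta"
    and "\<And>j k. j < K \<Longrightarrow> k < K \<Longrightarrow> j \<noteq> k \<Longrightarrow>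
      delta \<le> 1 - cos (polygon_angle K j - polygon_angle K k)"
proof -
  define gap where "gap = (\<lambda>(j, k). 1 - cos (polygon_angle K j - polygon_angle K k))"
  define gaps where "gaps = insert 1 (gap ` {(j, k). j < K \<and> k < K \<and> j \<noteq> k})"
  have "finite {(j, k). j < K \<and> k < K \<and> j \<noteq> k}"
    by (rule finite_subset[of _ "{..<K} \<times> {..<K}"]) auto
  then have "finite gaps" by (simp add: gaps_def)
  moreover have "0 < g" if "g \<in> gaps" for g
    using that cos_polygon_angle_diff_lt_1 by (auto simp: gaps_def gap_def)
  ultimately have "0 < Min gaps" by (simp add: gaps_def)
  moreover have "Min gaps \<le> gap (j, k)" if "j < K" "k < K" "j \<noteq> k" for j k
    using \<open>finite gaps\<close> that by (intro Min_le) (auto simp: gaps_def)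
  ultimately show ?thesis using that unfolding gap_def by auto
qed

lemma total_CE_polygon_le:
  assumes "2 \<le> d"
  obtains c where "0 \<le> c"
    and "\<And>tau. 0 < tau \<Longrightarrow>
      total_CE d K n (polygon K) (repeat_columns n K (polygon K)) tau \<le> c * tau"
proof -
  obtain delta where delta: "0 < delta" "\<And>j k. j < K \<Longrightarrow> k < K \<Longrightarrow> j \<noteq> k \<Longrightarrow>
      delta \<le> 1 - cos (polygon_angle K j - polygon_angle K k)"
    using polygon_gap[of K] by metis
  have "total_CE d K n (polygon K) (repeat_columns n K (polygon K)) tau
      \<le> real n * real K * real K / delta * tau" if "0 < tau" for tau
  proof -
    have "L_CE K (logits d (polygon K) (polygon K k)) k tau \<le> real K * tau / delta" if "k < K" for k
    proof (rule L_CE_le_of_logit_gap)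
      fix j assume "j < K" "j \<noteq> k"
      then show "logits d (polygon K) (polygon K k) j - logits d (polygon K) (polygon K k) k \<le> - delta"
        using delta(2)[of j k] logits_polygon[OF assms] \<open>k < K\<close> by simp
    qed (use that \<open>0 < tau\<close> delta(1) in auto)
    then have "total_CE d K n (polygon K) (repeat_columns n K (polygon K)) tau
        \<le> (\<Sum>i<n. \<Sum>k<K. real K * tau / delta)"
      unfolding total_CE_def by (intro sum_mono) (simp add: hcol_repeat_columns)
    then show ?thesis by simp
  qed
  moreover have "0 \<le> real n * real K * real K / delta" using delta(1) by simp
  ultimately show ?thesis using that by blast
qed

lemma argmin_L0_subset_WH_minus_dim1:
  assumes "0 < n" "2 \<le> K"
  shows "\<exists>tau0>0. \<forall>tau. 0 < tau \<and> tau < tau0 \<longrightarrow> argmin_L0 1 K n tau \<subseteq> WH_minus 1 K n"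
proof -
  define C where "C = real n * (real K * ln (real K))"
  have "0 \<le> C" using assms by (simp add: C_def)
  have "argmin_L0 1 K n tau \<subseteq> WH_minus 1 K n" if "0 < tau" "tau < 1 / (C + 1)" for tau
  proof (rule argmin_L0_subset_WH_minus[OF collapsed_OB collapsed_OB assms(2,1) that(1)])
    fix W H k i k'
    assume "W \<in> OB 1 K" "H \<in> OB 1 (n * K)" "i < n" "k < K" "k' < K" "0 < margin 1 n W H k i k'"
    then have "margin 1 n W H k i k' = 2" by (rule margin_dim1_pos_eq_2)
    have "total_CE 1 K n (collapsed K) (collapsed (n * K)) tau = C"
      unfolding C_def by (rule total_CE_collapsed) simp
    also have "\<dots> < 1 / tau" using that \<open>0 \<le> C\<close> by (simp add: field_simps)
    also have "\<dots> < 2 / tau" using that(1) by (simp add: divide_strict_right_mono)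
    also have "\<dots> < ln (1 + exp (2 / tau))" by (rule less_ln_one_plus_exp)
    finally show "total_CE 1 K n (collapsed K) (collapsed (n * K)) tau
        < ln (1 + exp (margin 1 n W H k i k' / tau))"
      using \<open>margin 1 n W H k i k' = 2\<close> by simp
  qed auto
  then show ?thesis using \<open>0 \<le> C\<close> by (intro exI[of _ "1 / (C + 1)"]) auto
qed

lemma argmin_L0_subset_WH_minus_dim_ge2:
  assumes "2 \<le> d" "0 < n" "2 \<le> K"
  shows "\<exists>tau0>0. \<forall>tau. 0 < tau \<and> tau < tau0 \<longrightarrow> argmin_L0 d K n tau \<subseteq> WH_minus d K n"
proof -
  obtain c where "0 \<le> c" and bound: "\<And>tau. 0 < tau \<Longrightarrow>
      total_CE d K n (polygon K) (repeat_columns n K (polygon K)) tau \<le> c * tau"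
    using total_CE_polygon_le[OF assms(1)] by blast
  have "argmin_L0 d K n tau \<subseteq> WH_minus d K n" if "0 < tau" "tau < ln 2 / (c + 1)" for tau
  proof (rule argmin_L0_subset_WH_minus[OF polygon_OB repeat_columns_OB[OF polygon_OB]
        assms(3,2) that(1)])
    fix W H k i k' assume "0 < margin d n W H k i k'"
    have "total_CE d K n (polygon K) (repeat_columns n K (polygon K)) tau \<le> c * tau"
      using bound[OF that(1)] .
    also have "\<dots> < ln 2" using that \<open>0 \<le> c\<close> by (simp add: field_simps)
    also have "\<dots> < ln (1 + exp (margin d n W H k i k' / tau))"
      using \<open>0 < margin d n W H k i k'\<close> that(1) by (simp add: add_pos_pos)
    finally show "total_CE d K n (polygon K) (repeat_columns n K (polygon K)) tau
        < ln (1 + exp (margin d n W H k i k' / tau))" .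
  qed (use assms in auto)
  then show ?thesis using \<open>0 \<le> c\<close> by (intro exI[of _ "ln 2 / (c + 1)"]) auto
qed

theorem mainTheorem11:
  fixes d K n :: nat
  assumes "0 < d" and "0 < n" and "2 \<le> K"
  shows "\<exists>tau0>0. \<forall>tau. 0 < tau \<and> tau < tau0 \<longrightarrow>
           argmin_L0 d K n tau \<subseteq> WH_minus d K n"
proof (cases "d = 1")
  case True
  then show ?thesis using argmin_L0_subset_WH_minus_dim1[OF assms(2,3)] by simp
next
  case False
  then have "2 \<le> d" using assms(1) by simp
  then show ?thesis using argmin_L0_subset_WH_minus_dim_ge2 assms(2,3) by blast
qed

end
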